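(* Let $G$ be a finite graph with nonnegative edge lengths, let $\theta\geq 0$, and let $v$ be a vertex of $G$. Consider the game Graph Exploration on $G$ started at $v$ with parameter $\theta$. Then Bob's payoff under optimal play by both players equals $M(G)-M(G-v)$.
   Context: Graph Exploration: two players, Alice and Bob, take turns choosing the next edge of a self-avoiding walk in $G$ starting at $v$, with Alice moving first. The player who chooses an edge pays its length to the opponent. At each turn the player to move may instead (and, if no move is available, must) terminate the game by paying $\theta/2$ to the opponent. Each player tries to maximize their total payoff; this is a finite zero-sum game of perfect information. For a finite graph $H$ with edge lengths, $M(H)$ denotes the cost of the diluted matching problem: the minimum, over all partial matchings of $H$ (sets of edges no two sharing a vertex), of the sum of the lengths of the edges in the matching plus $\theta/2$ times the number of vertices not covered by it. $G-v$ is the graph obtained from $G$ by deleting $v$ and its incident edges. *)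

theory Defs
  imports Complex_Main
begin

definition wgraph :: "'a set \<Rightarrow> ('a \<Rightarrow> 'a \<Rightarrow> bool) \<Rightarrow> ('a \<Rightarrow> 'a \<Rightarrow> real) \<Rightarrow> bool" where
  "wgraph V E w \<longleftrightarrow> finite V
     \<and> (\<forall>x y. E x y \<longrightarrow> x \<in> V \<and> y \<in> V)
     \<and> (\<forall>x y. E x y \<longrightarrow> E y x)
     \<and> (\<forall>x. \<not> E x x)
     \<and> (\<forall>x y. E x y \<longrightarrow> w x y = w y x \<and> w x y \<ge> 0)"

text \<open>Value of Graph Exploration (net payoff of the player to move), when the walk is at x
  and the set of already visited vertices is S. The natural number is a fuel bound; with
  fuel at least the number of unvisited vertices it never runs out before moves do.\<close>
fun explore_val :: "'a set \<Rightarrow> ('a \<Rightarrow> 'a \<Rightarrow> bool) \<Rightarrow> ('a \<Rightarrow> 'a \<Rightarrow> real) \<Rightarrow> real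
    \<Rightarrow> nat \<Rightarrow> 'a set \<Rightarrow> 'a \<Rightarrow> real" where
  "explore_val V E w \<theta> 0 S x = - \<theta> / 2"
| "explore_val V E w \<theta> (Suc n) S x =
     Max (insert (- \<theta> / 2)
       {- w x u - explore_val V E w \<theta> n (insert u S) u | u. u \<in> V \<and> E x u \<and> u \<notin> S})"

definition bob_payoff :: "'a set \<Rightarrow> ('a \<Rightarrow> 'a \<Rightarrow> bool) \<Rightarrow> ('a \<Rightarrow> 'a \<Rightarrow> real) \<Rightarrow> real \<Rightarrow> 'a \<Rightarrow> real" where
  "bob_payoff V E w \<theta> v = - explore_val V E w \<theta> (card V) {v} v"

definition is_matching :: "'a set \<Rightarrow> ('a \<Rightarrow> 'a \<Rightarrow> bool) \<Rightarrow> ('a \<times> 'a) set \<Rightarrow> bool" where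
  "is_matching V E Mt \<longleftrightarrow>
     (\<forall>(x,y)\<in>Mt. x \<in> V \<and> y \<in> V \<and> E x y)
     \<and> (\<forall>p\<in>Mt. \<forall>q\<in>Mt. p \<noteq> q \<longrightarrow> {fst p, snd p} \<inter> {fst q, snd q} = {})"

definition covered :: "('a \<times> 'a) set \<Rightarrow> 'a set" where
  "covered Mt = fst ` Mt \<union> snd ` Mt"

definition matching_cost :: "'a set \<Rightarrow> ('a \<Rightarrow> 'a \<Rightarrow> real) \<Rightarrow> real \<Rightarrow> ('a \<times> 'a) set \<Rightarrow> real" where
  "matching_cost V w \<theta> Mt = (\<Sum>(x,y)\<in>Mt. w x y) + \<theta> / 2 * real (card (V - covered Mt))"

definition dmatch :: "'a set \<Rightarrow> ('a \<Rightarrow> 'a \<Rightarrow> bool) \<Rightarrow> ('a \<Rightarrow> 'a \<Rightarrow> real) \<Rightarrow> real \<Rightarrow> real" where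
  "dmatch V E w \<theta> = Min (matching_cost V w \<theta> ` {Mt. is_matching V E Mt})"

end

theory Submission
  imports Defs
begin

text \<open>Fix the position x of the walk and let H be x together with the unvisited vertices.
  In an optimal diluted matching of H the vertex x is either left uncovered or matched to a
  neighbour u; hence M(H) obeys the same one-step recurrence in x as the game, namely
  M(H - x) - M(H) = max(-\<theta>/2, max_u (- w x u - (M(H - x - u) - M(H - x)))).
  Induction on the number of unvisited vertices then identifies the value of the player to
  move at x with M(H - x) - M(H).\<close>

lemma finite_matchings:
  assumes "finite H"
  shows "finite {Mt. is_matching H E Mt}"
proof (rule finite_subset)
  show "{Mt. is_matching H E Mt} \<subseteq> Pow (H \<times> H)"
    unfolding is_matching_def by fastforce
qed (use assms in simp)

lemma matching_finite:
  assumes "finite H" "is_matching H E Mt"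
  shows "finite Mt"
proof (rule finite_subset)
  show "Mt \<subseteq> H \<times> H"
    using assms(2) unfolding is_matching_def by fastforce
qed (use assms(1) in simp)

lemma is_matching_empty: "is_matching H E {}"
  unfolding is_matching_def by simp

lemma matching_covered_subset: "is_matching H E Mt \<Longrightarrow> covered Mt \<subseteq> H"
  unfolding is_matching_def covered_def by fastforce

lemma dmatch_le_matching_cost:
  assumes "finite H" "is_matching H E Mt"
  shows "dmatch H E w \<theta> \<le> matching_cost H w \<theta> Mt"
  unfolding dmatch_def using assms
  by (intro Min_le finite_imageI finite_matchings) auto

lemma dmatch_attained:
  assumes "finite H"
  obtains Mt where "is_matching H E Mt" "dmatch H E w \<theta> = matching_cost H w \<theta> Mt"
proof -
  have "dmatch H E w \<theta> \<in> matching_cost H w \<theta> ` {Mt. is_matching H E Mt}"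
    unfolding dmatch_def using assms is_matching_empty[of H E]
    by (intro Min_in finite_imageI finite_matchings) auto
  then show ?thesis using that by blast
qed

lemma matching_cost_add_uncovered_vertex:
  assumes "is_matching (H - {x}) E Mt" "x \<in> H" "finite H"
  shows "is_matching H E Mt"
    and "matching_cost H w \<theta> Mt = \<theta>/2 + matching_cost (H - {x}) w \<theta> Mt"
proof -
  show "is_matching H E Mt"
    using assms(1) unfolding is_matching_def by auto
  have "H - covered Mt = insert x ((H - {x}) - covered Mt)"
    using matching_covered_subset[OF assms(1)] assms(2) by auto
  then have "card (H - covered Mt) = Suc (card ((H - {x}) - covered Mt))"
    using assms(3) by simp
  then show "matching_cost H w \<theta> Mt = \<theta>/2 + matching_cost (H - {x}) w \<theta> Mt"
    unfolding matching_cost_def by (simp add: algebra_simps)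
qed

lemma matching_cost_add_edge:
  assumes "is_matching (H - {x,u}) E Mt" "x \<in> H" "u \<in> H" "E x u" "finite H"
  shows "is_matching H E (insert (x,u) Mt)"
    and "matching_cost H w \<theta> (insert (x,u) Mt) = w x u + matching_cost (H - {x,u}) w \<theta> Mt"
proof -
  have disjoint: "{fst q, snd q} \<inter> {x,u} = {}" if "q \<in> Mt" for q
    using matching_covered_subset[OF assms(1)] that unfolding covered_def by force
  show "is_matching H E (insert (x,u) Mt)"
    using assms(1-4) disjoint unfolding is_matching_def by (simp add: Int_commute) blast
  have "(x,u) \<notin> Mt"
    using disjoint by fastforce
  then have "(\<Sum>(a,b)\<in>insert (x,u) Mt. w a b) = w x u + (\<Sum>(a,b)\<in>Mt. w a b)"
    using matching_finite[OF _ assms(1)] assms(5) by simp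
  moreover have "H - covered (insert (x,u) Mt) = (H - {x,u}) - covered Mt"
    unfolding covered_def by auto
  ultimately show "matching_cost H w \<theta> (insert (x,u) Mt) = w x u + matching_cost (H - {x,u}) w \<theta> Mt"
    unfolding matching_cost_def by simp
qed

lemma matching_cost_remove_edge:
  assumes "is_matching H E Mt" "(a,b) \<in> Mt" "finite H"
  shows "is_matching (H - {a,b}) E (Mt - {(a,b)})"
    and "matching_cost H w \<theta> Mt = w a b + matching_cost (H - {a,b}) w \<theta> (Mt - {(a,b)})"
proof -
  have "{fst q, snd q} \<inter> {a,b} = {}" if "q \<in> Mt - {(a,b)}" for q
    using assms(1,2) that unfolding is_matching_def by (metis DiffE fst_conv singletonI snd_conv)
  then show matching: "is_matching (H - {a,b}) E (Mt - {(a,b)})"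
    using assms(1) unfolding is_matching_def by fastforce
  have "a \<in> H" "b \<in> H" "E a b"
    using assms(1,2) unfolding is_matching_def by auto
  with matching_cost_add_edge(2)[OF matching _ _ _ assms(3)] assms(2)
  show "matching_cost H w \<theta> Mt = w a b + matching_cost (H - {a,b}) w \<theta> (Mt - {(a,b)})"
    by (simp add: insert_absorb)
qed

lemma dmatch_le_uncovered:
  assumes "finite H" "x \<in> H"
  shows "dmatch H E w \<theta> \<le> \<theta>/2 + dmatch (H - {x}) E w \<theta>"
proof -
  obtain Mt where Mt: "is_matching (H - {x}) E Mt"
      "dmatch (H - {x}) E w \<theta> = matching_cost (H - {x}) w \<theta> Mt"
    using dmatch_attained assms(1) by blast
  show ?thesis
    using dmatch_le_matching_cost[OF assms(1) matching_cost_add_uncovered_vertex(1)[OF Mt(1) assms(2,1)]]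
      matching_cost_add_uncovered_vertex(2)[OF Mt(1) assms(2,1)] Mt(2)
    by simp
qed

lemma dmatch_le_edge:
  assumes "finite H" "x \<in> H" "u \<in> H" "E x u"
  shows "dmatch H E w \<theta> \<le> w x u + dmatch (H - {x,u}) E w \<theta>"
proof -
  obtain Mt where Mt: "is_matching (H - {x,u}) E Mt"
      "dmatch (H - {x,u}) E w \<theta> = matching_cost (H - {x,u}) w \<theta> Mt"
    using dmatch_attained assms(1) by blast
  note extended = matching_cost_add_edge[OF Mt(1) assms(2-4,1)]
  show ?thesis
    using dmatch_le_matching_cost[OF assms(1) extended(1)] extended(2) Mt(2) by simp
qed

context
  fixes E :: "'a \<Rightarrow> 'a \<Rightarrow> bool" and w :: "'a \<Rightarrow> 'a \<Rightarrow> real"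
  assumes sym_E: "E a b \<Longrightarrow> E b a"
    and sym_w: "E a b \<Longrightarrow> w a b = w b a"
    and irrefl_E: "\<not> E a a"
begin

lemma matching_at_vertex_cases:
  assumes "is_matching H E Mt" "x \<in> H" "finite H"
  obtains (uncovered) "is_matching (H - {x}) E Mt"
      "matching_cost H w \<theta> Mt = \<theta>/2 + matching_cost (H - {x}) w \<theta> Mt"
  | (matched) u Mt' where "u \<in> H" "E x u" "u \<noteq> x" "is_matching (H - {x,u}) E Mt'"
      "matching_cost H w \<theta> Mt = w x u + matching_cost (H - {x,u}) w \<theta> Mt'"
proof (cases "x \<in> covered Mt")
  case False
  then have "is_matching (H - {x}) E Mt"
    using assms(1) unfolding is_matching_def covered_def by force
  then show ?thesis
    using uncovered matching_cost_add_uncovered_vertex(2)[OF _ assms(2,3)] by blast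
next
  case True
  then obtain a b where ab: "(a,b) \<in> Mt" "x = a \<or> x = b"
    unfolding covered_def by force
  have edge: "a \<in> H" "b \<in> H" "E a b" "a \<noteq> b"
    using ab(1) assms(1) irrefl_E unfolding is_matching_def by auto
  note rest = matching_cost_remove_edge[OF assms(1) ab(1) assms(3)]
  from ab(2) show ?thesis
  proof
    assume "x = a"
    then show ?thesis using matched[OF edge(2)] edge rest by auto
  next
    assume "x = b"
    moreover have "{a,b} = {b,a}" "w a b = w b a"
      using sym_w edge(3) by auto
    ultimately show ?thesis using matched[OF edge(1)] edge sym_E rest by auto
  qed
qed

lemma dmatch_vertex_recurrence:
  assumes "finite H" "x \<in> H"
  shows "dmatch (H - {x}) E w \<theta> - dmatch H E w \<theta> =
    Max (insert (- \<theta> / 2) {- w x u - (dmatch (H - {x} - {u}) E w \<theta> - dmatch (H - {x}) E w \<theta>)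
       | u. u \<in> H \<and> E x u \<and> u \<noteq> x})"
    (is "?lhs = Max (insert _ ?moves)")
proof (rule Max_eqI[symmetric])
  have uncovered_bound: "dmatch H E w \<theta> \<le> \<theta>/2 + dmatch (H - {x}) E w \<theta>"
    using dmatch_le_uncovered[OF assms] .
  have edge_bound: "dmatch H E w \<theta> \<le> w x u + dmatch (H - {x} - {u}) E w \<theta>"
    if "u \<in> H" "E x u" for u
    using dmatch_le_edge[where E=E, OF assms that] by (simp add: Diff_insert2[symmetric])
  show "finite (insert (- \<theta> / 2) ?moves)"
    using assms(1) by simp
  show "y \<le> ?lhs" if "y \<in> insert (- \<theta> / 2) ?moves" for y
    using that uncovered_bound edge_bound by fastforce
  obtain Mt where Mt: "is_matching H E Mt" "dmatch H E w \<theta> = matching_cost H w \<theta> Mt"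
    using dmatch_attained assms(1) by blast
  show "?lhs \<in> insert (- \<theta> / 2) ?moves"
    using Mt(1) assms(2,1)
  proof (cases rule: matching_at_vertex_cases[where \<theta>=\<theta>])
    case uncovered
    then have "dmatch (H - {x}) E w \<theta> \<le> matching_cost (H - {x}) w \<theta> Mt"
      using assms(1) by (simp add: dmatch_le_matching_cost)
    then have "?lhs = - \<theta>/2"
      using uncovered(2) Mt(2) uncovered_bound by linarith
    then show ?thesis by simp
  next
    case (matched u Mt')
    then have "dmatch (H - {x} - {u}) E w \<theta> \<le> matching_cost (H - {x,u}) w \<theta> Mt'"
      using assms(1) by (simp add: dmatch_le_matching_cost Diff_insert2[symmetric])
    then have "dmatch H E w \<theta> = w x u + dmatch (H - {x} - {u}) E w \<theta>"
      using matched(5) Mt(2) edge_bound[OF matched(1,2)] by linarith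
    then show ?thesis
      using matched(1-3) by force
  qed
qed

lemma explore_val_eq_dmatch_diff:
  assumes "finite V"
  shows "S \<subseteq> V \<Longrightarrow> x \<in> S \<Longrightarrow> card (V - S) \<le> n \<Longrightarrow>
    explore_val V E w \<theta> n S x = dmatch (V - S) E w \<theta> - dmatch (insert x (V - S)) E w \<theta>"
proof (induction n arbitrary: S x)
  case 0
  then have "V - S = {}"
    using assms(1) by auto
  show ?case
    unfolding \<open>V - S = {}\<close> using dmatch_vertex_recurrence[where H="{x}" and x=x and \<theta>=\<theta>]
    by simp
next
  case (Suc n)
  define H where "H = insert x (V - S)"
  have H_minus_x: "H - {x} = V - S"
    using Suc.prems(2) unfolding H_def by auto
  have moves_iff: "u \<in> V \<and> E x u \<and> u \<notin> S \<longleftrightarrow> u \<in> H \<and> E x u \<and> u \<noteq> x" for u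
    using Suc.prems(2) unfolding H_def by auto
  have move_val: "explore_val V E w \<theta> n (insert u S) u
      = dmatch (H - {x} - {u}) E w \<theta> - dmatch (H - {x}) E w \<theta>"
    if "u \<in> V" "u \<notin> S" for u
  proof -
    have "V - insert u S = (V - S) - {u}"
      by auto
    then have "card (V - S) = Suc (card (V - insert u S))"
      using card_Suc_Diff1[of "V - S" u] that assms(1) by simp
    then have "explore_val V E w \<theta> n (insert u S) u
        = dmatch (V - insert u S) E w \<theta> - dmatch (insert u (V - insert u S)) E w \<theta>"
      using Suc.IH[of "insert u S" u] Suc.prems(1,3) that(1) by simp
    moreover have "V - insert u S = H - {x} - {u}" "insert u (V - insert u S) = H - {x}"
      using H_minus_x that by auto
    ultimately show ?thesis by simp
  qed
  have "{- w x u - explore_val V E w \<theta> n (insert u S) u | u. u \<in> V \<and> E x u \<and> u \<notin> S}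
      = {- w x u - (dmatch (H - {x} - {u}) E w \<theta> - dmatch (H - {x}) E w \<theta>)
          | u. u \<in> H \<and> E x u \<and> u \<noteq> x}"
  proof (rule Collect_cong)
    show "(\<exists>u. y = - w x u - explore_val V E w \<theta> n (insert u S) u \<and> u \<in> V \<and> E x u \<and> u \<notin> S)
      \<longleftrightarrow> (\<exists>u. y = - w x u - (dmatch (H - {x} - {u}) E w \<theta> - dmatch (H - {x}) E w \<theta>)
          \<and> u \<in> H \<and> E x u \<and> u \<noteq> x)" for y
      using moves_iff move_val by (smt (verit))
  qed
  then have "explore_val V E w \<theta> (Suc n) S x = dmatch (H - {x}) E w \<theta> - dmatch H E w \<theta>"
    using dmatch_vertex_recurrence[where H=H and x=x and \<theta>=\<theta>] assms(1)
    unfolding H_def by simp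
  then show ?case
    unfolding H_minus_x unfolding H_def .
qed

end

theorem proposition1:
  fixes V :: "'a set" and E :: "'a \<Rightarrow> 'a \<Rightarrow> bool" and w :: "'a \<Rightarrow> 'a \<Rightarrow> real"
    and \<theta> :: real and v :: 'a
  assumes "wgraph V E w" and "\<theta> \<ge> 0" and "v \<in> V"
  shows "bob_payoff V E w \<theta> v = dmatch V E w \<theta> - dmatch (V - {v}) E w \<theta>"
proof -
  have graph: "\<And>a b. E a b \<Longrightarrow> E b a" "\<And>a b. E a b \<Longrightarrow> w a b = w b a" "\<And>a. \<not> E a a" "finite V"
    using assms(1) unfolding wgraph_def by auto
  have "card (V - {v}) \<le> card V"
    using graph(4) by (simp add: card_mono)
  then have "explore_val V E w \<theta> (card V) {v} v = dmatch (V - {v}) E w \<theta> - dmatch V E w \<theta>"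
    using explore_val_eq_dmatch_diff[where E=E and w=w, OF graph, where S="{v}" and x=v
        and \<theta>=\<theta> and n="card V"] assms(3)
    by (simp add: insert_absorb)
  then show ?thesis
    unfolding bob_payoff_def by simp
qed

end
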